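(* Let $\boldsymbol\mu=\{\mu_t\}_{t>0}$ be a factorizing family over $[0,1]\times L$. Then for every $0\le s<t\le1$, the measures $(R_{s,t})_*\mu_1$ and $\mu_{t-s}$ on $\mathscr C_{t-s}$ are mutually absolutely continuous, where $R_{s,t}:\mathscr C_1\to\mathscr C_{t-s}$ is $R_{s,t}(Z)=(Z\cap([s,t]\times L))-(s,0)$.
   Context: Let $L$ be a locally compact, second countable Hausdorff space. For $t>0$ let $\mathscr C_t$ be the space of closed subsets of $[0,t]\times L$ with the Borel $\sigma$-field of the Fell topology. For $s,t>0$, $\oplus_{s,t}(Z_1,Z_2)=Z_1\cup\{(s+r,\ell):(r,\ell)\in Z_2\}$, and $A-(s,0)=\{(r-s,\ell):(r,\ell)\in A\}$. A family $\{\mu_t\}_{t>0}$ of probability measures on $\mathscr C_t$ is a factorizing family over $[0,1]\times L$ if (i) $\mu_{s+t}$ and $(\mu_s\otimes\mu_t)\circ\oplus_{s,t}^{-1}$ are mutually absolutely continuous for all $s,t>0$, and (ii) $\mu_t(\{Z:Z\cap(\{r\}\times L)\neq\varnothing\})=0$ for all $t>0$, $r\in[0,t]$. *)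

theory Defs
  imports "HOL-Analysis.Analysis" "HOL-Probability.Probability"
begin

definition strip :: "real \<Rightarrow> (real \<times> 'l::topological_space) set" where
  "strip t = {0..t} \<times> UNIV"

definition closed_subsets :: "real \<Rightarrow> (real \<times> 'l::topological_space) set set" where
  "closed_subsets t = {F. closedin (top_of_set (strip t)) F}"

definition Fell_topology :: "real \<Rightarrow> (real \<times> 'l::topological_space) set topology" where
  "Fell_topology t = topology_generated_by
     ({{F \<in> closed_subsets t. F \<inter> K = {}} | K. compactin (top_of_set (strip t)) K}
      \<union> {{F \<in> closed_subsets t. F \<inter> G \<noteq> {}} | G. openin (top_of_set (strip t)) G})"

definition borel_of_top :: "'a topology \<Rightarrow> 'a measure" where
  "borel_of_top X = sigma (topspace X) {U. openin X U}"

definition Cspace :: "real \<Rightarrow> (real \<times> 'l::topological_space) set measure" where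
  "Cspace t = borel_of_top (Fell_topology t)"

definition oplus :: "real \<Rightarrow> (real \<times> 'l) set \<Rightarrow> (real \<times> 'l) set \<Rightarrow> (real \<times> 'l) set" where
  "oplus s Z1 Z2 = Z1 \<union> {(s + r, l) | r l. (r, l) \<in> Z2}"

definition shift_back :: "(real \<times> 'l) set \<Rightarrow> real \<Rightarrow> (real \<times> 'l) set" where
  "shift_back A s = {(r - s, l) | r l. (r, l) \<in> A}"

definition mutually_ac :: "'a measure \<Rightarrow> 'a measure \<Rightarrow> bool" where
  "mutually_ac M N \<longleftrightarrow> absolutely_continuous M N \<and> absolutely_continuous N M"

definition factorizing_family :: "(real \<Rightarrow> (real \<times> 'l::topological_space) set measure) \<Rightarrow> bool" where
  "factorizing_family \<mu> \<longleftrightarrow>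
     (\<forall>t>0. prob_space (\<mu> t) \<and> sets (\<mu> t) = sets (Cspace t)) \<and>
     (\<forall>s>0. \<forall>t>0. mutually_ac (\<mu> (s + t))
        (distr (\<mu> s \<Otimes>\<^sub>M \<mu> t) (Cspace (s + t)) (\<lambda>(Z1, Z2). oplus s Z1 Z2))) \<and>
     (\<forall>t>0. \<forall>r\<in>{0..t}. emeasure (\<mu> t) {Z \<in> space (\<mu> t). Z \<inter> ({r} \<times> UNIV) \<noteq> {}} = 0)"

definition restr :: "real \<Rightarrow> real \<Rightarrow> (real \<times> 'l) set \<Rightarrow> (real \<times> 'l) set" where
  "restr s t Z = shift_back (Z \<inter> ({s..t} \<times> UNIV)) s"

end

theory Submission
  imports Defs
begin

(* Cut [0,u] at s: by factorization, \<mu>_u is equivalent to the law of the concatenation of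
   independent samples of \<mu>_s and \<mu>_(u-s), and as neither sample meets the cut point almost surely,
   the restriction of the concatenation to [s,t] is the restriction of the second sample to
   [0,t-s]. Cutting that sample again at t-s, its restriction to [0,t-s] is the first factor, whose
   law is \<mu>_(t-s). Null sets are transported in both directions along these equivalences.
   The measurability of concatenation and restriction rests on L being locally compact and second
   countable: then the Fell sigma-field is generated by the events {Z. Z \<inter> K = {}}, K compact,
   which both maps pull back to events of the same kind. *)

section \<open>Locally compact second countable spaces\<close>

lemma Hausdorff_space_euclidean_t2: "Hausdorff_space (euclidean :: 'a::t2_space topology)"
  unfolding Hausdorff_space_def by (metis disjnt_def hausdorff open_openin)

lemma locally_compact_space_euclidean_real_prod:
  assumes "locally_compact_space (euclidean :: 'l::topological_space topology)"
  shows "locally_compact_space (euclidean :: (real \<times> 'l) topology)"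
  using locally_compact_space_prod_topology[of "euclidean :: real topology" "euclidean :: 'l topology"]
    assms locally_compact_space_euclidean by simp

lemma countable_basis_compact_closure:
  assumes "locally_compact_space (euclidean :: 'a::{t2_space, second_countable_topology} topology)"
  obtains B :: "'a::{t2_space, second_countable_topology} set set"
  where "countable B" "\<And>b. b \<in> B \<Longrightarrow> open b \<and> compact (closure b)"
    and "\<And>U x. open U \<Longrightarrow> x \<in> U \<Longrightarrow> \<exists>b\<in>B. x \<in> b \<and> closure b \<subseteq> U"
proof -
  obtain BB :: "'a set set" where BB: "countable BB" "topological_basis BB"
    using ex_countable_basis by blast
  have nbhd: "neighbourhood_base_of (\<lambda>C. compactin euclidean C \<and> closedin euclidean C)
      (euclidean :: 'a topology)"
    using assms Hausdorff_space_euclidean_t2 locally_compact_space_neighbourhood_base_closedin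
    by blast
  have "\<exists>b\<in>{b \<in> BB. compact (closure b)}. x \<in> b \<and> closure b \<subseteq> U" if U: "open U" "x \<in> U" for U x
  proof -
    obtain V C where VC: "open V" "compact C" "closed C" "x \<in> V" "V \<subseteq> C" "C \<subseteq> U"
      using nbhd U unfolding neighbourhood_base_of
      by (metis closed_closedin compactin_euclidean_iff open_openin)
    obtain b where b: "b \<in> BB" "x \<in> b" "b \<subseteq> V"
      using BB(2) VC(1,4) by (meson topological_basisE)
    have "closure b \<subseteq> C"
      using b(3) VC(3,5) by (simp add: closure_minimal)
    moreover have "compact (closure b)"
      using compact_Int_closed[OF VC(2), of "closure b"] \<open>closure b \<subseteq> C\<close> by (simp add: Int_absorb1)
    ultimately show ?thesis
      using b VC(6) by blast
  qed
  moreover have "open b" if "b \<in> BB" for b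
    using BB(2) that topological_basis_open by blast
  ultimately show ?thesis
    using BB(1) by (intro that[of "{b \<in> BB. compact (closure b)}"]) auto
qed

lemma open_eq_countable_Union_compact:
  assumes "locally_compact_space (euclidean :: 'a::{t2_space, second_countable_topology} topology)"
    and "open U"
  obtains \<K> :: "'a::{t2_space, second_countable_topology} set set"
  where "countable \<K>" "\<And>K. K \<in> \<K> \<Longrightarrow> compact K" "U = \<Union>\<K>"
proof -
  obtain B :: "'a set set" where B: "countable B" "\<And>b. b \<in> B \<Longrightarrow> open b \<and> compact (closure b)"
    "\<And>U x. open U \<Longrightarrow> x \<in> U \<Longrightarrow> \<exists>b\<in>B. x \<in> b \<and> closure b \<subseteq> U"
    using countable_basis_compact_closure[OF assms(1)] by blast
  let ?\<K> = "closure ` {b \<in> B. closure b \<subseteq> U}"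
  have "U \<subseteq> \<Union>?\<K>"
    using B(3)[OF assms(2)] closure_subset by blast
  then show ?thesis
    using B(1,2) by (intro that[of ?\<K>]) auto
qed

lemma generate_topology_on_refinement:
  assumes "generate_topology_on S U" "x \<in> U"
    and refine: "\<And>s x. s \<in> S \<Longrightarrow> x \<in> s \<Longrightarrow> \<exists>s'\<in>S'. x \<in> s' \<and> s' \<subseteq> s"
  shows "\<exists>A. finite A \<and> A \<noteq> {} \<and> A \<subseteq> S' \<and> x \<in> \<Inter>A \<and> \<Inter>A \<subseteq> U"
  using assms(1,2)
proof (induction arbitrary: x)
  case Empty
  then show ?case by simp
next
  case (Int a b)
  obtain A where "finite A" "A \<noteq> {}" "A \<subseteq> S'" "x \<in> \<Inter>A" "\<Inter>A \<subseteq> a"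
    using Int.IH(1)[of x] Int.prems by blast
  moreover obtain B where "finite B" "B \<noteq> {}" "B \<subseteq> S'" "x \<in> \<Inter>B" "\<Inter>B \<subseteq> b"
    using Int.IH(2)[of x] Int.prems by blast
  ultimately show ?case
    by (intro exI[of _ "A \<union> B"]) auto
next
  case (UN K)
  from UN.prems obtain k where "k \<in> K" "x \<in> k"
    by blast
  then obtain A where "finite A" "A \<noteq> {}" "A \<subseteq> S'" "x \<in> \<Inter>A" "\<Inter>A \<subseteq> k"
    using UN.IH by meson
  with \<open>k \<in> K\<close> show ?case
    by (intro exI[of _ A]) auto
next
  case (Basis s)
  then obtain s' where "s' \<in> S'" "x \<in> s'" "s' \<subseteq> s"
    using refine by blast
  then show ?case
    by (intro exI[of _ "{s'}"]) auto
qed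

lemma openin_topology_generated_by_in_sigma_sets:
  assumes "openin (topology_generated_by S) U"
    and "countable S'" "S' \<subseteq> sigma_sets \<Omega> G" "G \<subseteq> Pow \<Omega>"
    and "\<And>s x. s \<in> S \<Longrightarrow> x \<in> s \<Longrightarrow> \<exists>s'\<in>S'. x \<in> s' \<and> s' \<subseteq> s"
  shows "U \<in> sigma_sets \<Omega> G"
proof -
  interpret sigma_algebra \<Omega> "sigma_sets \<Omega> G"
    using assms(4) by (rule sigma_algebra_sigma_sets)
  let ?W = "Inter ` {A. finite A \<and> A \<noteq> {} \<and> A \<subseteq> S' \<and> \<Inter>A \<subseteq> U}"
  have "U \<subseteq> \<Union>?W"
  proof
    fix x assume "x \<in> U"
    then obtain A where "finite A" "A \<noteq> {}" "A \<subseteq> S'" "x \<in> \<Inter>A" "\<Inter>A \<subseteq> U"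
      using generate_topology_on_refinement[of S U x S'] assms(1,5)
      unfolding openin_topology_generated_by_iff by blast
    then show "x \<in> \<Union>?W"
      by blast
  qed
  then have "U = \<Union>?W"
    by blast
  also have "\<dots> \<in> sigma_sets \<Omega> G"
  proof (rule sigma_sets_UNION)
    show "countable ?W"
      by (intro countable_image countable_subset[OF _ countable_Collect_finite_subset[OF assms(2)]])
        auto
    fix w assume "w \<in> ?W"
    then obtain A where A: "finite A" "A \<noteq> {}" "A \<subseteq> S'" "w = \<Inter>A"
      by auto
    have "(\<Inter>s\<in>A. s) \<in> sigma_sets \<Omega> G"
      using A(1-3) assms(3) by (intro finite_INT) auto
    then show "w \<in> sigma_sets \<Omega> G"
      using A(4) by simp
  qed
  finally show ?thesis .
qed

section \<open>The Fell sigma-field\<close>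

lemma closed_strip: "closed (strip t)"
  unfolding strip_def by (intro closed_Times) auto

lemma mem_strip [simp]: "(r, l) \<in> strip t \<longleftrightarrow> 0 \<le> r \<and> r \<le> t"
  unfolding strip_def by simp

lemma mem_closed_subsets: "F \<in> closed_subsets t \<longleftrightarrow> closed F \<and> F \<subseteq> strip t"
  unfolding closed_subsets_def by (simp add: closedin_closed_eq[OF closed_strip])

definition miss :: "real \<Rightarrow> (real \<times> 'l::topological_space) set \<Rightarrow> (real \<times> 'l) set set" where
  "miss t K = {F \<in> closed_subsets t. F \<inter> K = {}}"

definition hit :: "real \<Rightarrow> (real \<times> 'l::topological_space) set \<Rightarrow> (real \<times> 'l) set set" where
  "hit t G = {F \<in> closed_subsets t. F \<inter> G \<noteq> {}}"

definition miss_sets :: "real \<Rightarrow> (real \<times> 'l::topological_space) set set set" where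
  "miss_sets t = {miss t K | K. compact K \<and> K \<subseteq> strip t}"

definition Fell_subbasis :: "real \<Rightarrow> (real \<times> 'l::topological_space) set set set" where
  "Fell_subbasis t = miss_sets t \<union> {hit t (strip t \<inter> U) | U. open U}"

lemma Fell_topology_eq:
  "Fell_topology t = topology_generated_by (Fell_subbasis t :: (real \<times> 'l::topological_space) set set set)"
proof -
  have "{{F \<in> closed_subsets t. F \<inter> K = {}} | K. compactin (top_of_set (strip t)) K}
      = (miss_sets t :: (real \<times> 'l) set set set)"
    unfolding miss_sets_def miss_def by (simp add: compactin_subtopology)
  moreover have "{{F \<in> closed_subsets t. F \<inter> G \<noteq> {}} | G. openin (top_of_set (strip t)) G}
      = {hit t (strip t \<inter> U) | U :: (real \<times> 'l) set. open U}"
    unfolding hit_def openin_open by blast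
  ultimately show ?thesis
    unfolding Fell_topology_def Fell_subbasis_def by simp
qed

lemma topspace_Fell_topology: "topspace (Fell_topology t) = closed_subsets t"
proof -
  have "miss t {} \<in> Fell_subbasis t" "miss t {} = closed_subsets t"
    unfolding Fell_subbasis_def miss_sets_def miss_def by auto
  moreover have "\<Union>(Fell_subbasis t) \<subseteq> closed_subsets t"
    unfolding Fell_subbasis_def miss_sets_def miss_def hit_def by auto
  ultimately show ?thesis
    unfolding Fell_topology_eq topology_generated_by_topspace by blast
qed

lemma space_Cspace: "space (Cspace t) = closed_subsets t"
  unfolding Cspace_def borel_of_top_def
  using openin_subset[of "Fell_topology t"]
  by (subst space_measure_of) (auto simp: topspace_Fell_topology)

lemma sets_Cspace: "sets (Cspace t) = sigma_sets (closed_subsets t) {U. openin (Fell_topology t) U}"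
  unfolding Cspace_def borel_of_top_def
  using openin_subset[of "Fell_topology t"]
  by (subst sets_measure_of) (auto simp: topspace_Fell_topology)

lemma miss_Int_strip: "miss t (K \<inter> strip t) = miss t K"
  unfolding miss_def mem_closed_subsets by blast

lemma miss_in_miss_sets: "compact K \<Longrightarrow> miss t K \<in> miss_sets t"
  unfolding miss_sets_def using miss_Int_strip compact_Int_closed[OF _ closed_strip] by blast

lemma miss_sets_subset_Pow: "miss_sets t \<subseteq> Pow (closed_subsets t)"
  unfolding miss_sets_def miss_def by auto

lemma openin_Fell_topology_miss: "compact K \<Longrightarrow> openin (Fell_topology t) (miss t K)"
  using miss_in_miss_sets
  by (auto simp: Fell_topology_eq openin_topology_generated_by_iff Fell_subbasis_def
      intro: generate_topology_on.Basis)

lemma miss_in_sets_Cspace: "compact K \<Longrightarrow> miss t K \<in> sets (Cspace t)"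
  unfolding sets_Cspace by (auto intro: openin_Fell_topology_miss)

lemma hit_in_sigma_miss_sets:
  assumes lc: "locally_compact_space (euclidean :: 'l::{t2_space, second_countable_topology} topology)"
    and "closed E" "open U"
  shows "hit t (E \<inter> U) \<in> sigma_sets (closed_subsets t) (miss_sets t :: (real \<times> 'l) set set set)"
proof -
  obtain \<K> :: "(real \<times> 'l) set set"
    where K: "countable \<K>" "\<And>K. K \<in> \<K> \<Longrightarrow> compact K" "U = \<Union>\<K>"
    using open_eq_countable_Union_compact[OF locally_compact_space_euclidean_real_prod[OF lc] assms(3)]
    by blast
  have "hit t (E \<inter> U) = (\<Union>K\<in>\<K>. closed_subsets t - miss t (E \<inter> K))"
    unfolding hit_def miss_def K(3) by blast
  also have "\<dots> \<in> sigma_sets (closed_subsets t) (miss_sets t)"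
  proof (rule sigma_sets_UNION)
    show "countable ((\<lambda>K. closed_subsets t - miss t (E \<inter> K)) ` \<K>)"
      using K(1) by (rule countable_image)
    fix D assume "D \<in> (\<lambda>K. closed_subsets t - miss t (E \<inter> K)) ` \<K>"
    then obtain K where "K \<in> \<K>" "D = closed_subsets t - miss t (E \<inter> K)"
      by blast
    moreover have "miss t (E \<inter> K) \<in> miss_sets t"
      using K(2)[OF \<open>K \<in> \<K>\<close>] assms(2) by (intro miss_in_miss_sets closed_Int_compact)
    ultimately show "D \<in> sigma_sets (closed_subsets t) (miss_sets t)"
      by (simp add: sigma_sets.Basic sigma_sets.Compl)
  qed
  finally show ?thesis .
qed

lemma miss_refinement:
  assumes "\<And>b. b \<in> B \<Longrightarrow> open b"
    and "\<And>U x. open U \<Longrightarrow> x \<in> U \<Longrightarrow> \<exists>b\<in>B. x \<in> b \<and> closure b \<subseteq> U"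
    and "compact K" "F \<in> miss t K"
  obtains \<F> where "finite \<F>" "\<F> \<subseteq> B" "F \<in> miss t (\<Union>(closure ` \<F>))"
    and "miss t (\<Union>(closure ` \<F>)) \<subseteq> miss t K"
proof -
  have F: "F \<in> closed_subsets t" "closed F" "F \<inter> K = {}"
    using assms(4) unfolding miss_def mem_closed_subsets by auto
  have "K \<subseteq> \<Union>{b \<in> B. closure b \<subseteq> - F}"
    using assms(2)[OF open_Compl[OF F(2)]] F(3) by blast
  then obtain \<F> where \<F>: "\<F> \<subseteq> {b \<in> B. closure b \<subseteq> - F}" "finite \<F>" "K \<subseteq> \<Union>\<F>"
    by (rule compactE[OF assms(3)]) (use assms(1) in blast)
  have "F \<in> miss t (\<Union>(closure ` \<F>))"
    using F(1) \<F>(1) unfolding miss_def by blast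
  moreover have "K \<subseteq> \<Union>(closure ` \<F>)"
    using \<F>(3) closure_subset by blast
  then have "miss t (\<Union>(closure ` \<F>)) \<subseteq> miss t K"
    unfolding miss_def by blast
  ultimately show ?thesis
    using \<F>(1,2) that by blast
qed

lemma Fell_subbasis_countable_refinement:
  assumes lc: "locally_compact_space (euclidean :: 'l::{t2_space, second_countable_topology} topology)"
  obtains S' :: "(real \<times> 'l::{t2_space, second_countable_topology}) set set set"
  where "countable S'" "S' \<subseteq> sigma_sets (closed_subsets t) (miss_sets t)"
    and "\<And>s F. s \<in> Fell_subbasis t \<Longrightarrow> F \<in> s \<Longrightarrow> \<exists>s'\<in>S'. F \<in> s' \<and> s' \<subseteq> s"
proof -
  obtain B :: "(real \<times> 'l) set set"
    where B: "countable B" "\<And>b. b \<in> B \<Longrightarrow> open b \<and> compact (closure b)"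
      and B_nhds: "\<And>U x. open U \<Longrightarrow> x \<in> U \<Longrightarrow> \<exists>b\<in>B. x \<in> b \<and> closure b \<subseteq> U"
    using countable_basis_compact_closure[OF locally_compact_space_euclidean_real_prod[OF lc]]
    by blast
  define S' where "S' = (\<lambda>\<F>. miss t (\<Union>(closure ` \<F>))) ` {\<F>. finite \<F> \<and> \<F> \<subseteq> B}
    \<union> (\<lambda>b. hit t (strip t \<inter> b)) ` B"
  have "countable S'"
    unfolding S'_def using B(1) by (intro countable_Un countable_image countable_Collect_finite_subset)
  moreover have "S' \<subseteq> sigma_sets (closed_subsets t) (miss_sets t)"
  proof -
    have "miss t (\<Union>(closure ` \<F>)) \<in> sigma_sets (closed_subsets t) (miss_sets t)"
      if "finite \<F>" "\<F> \<subseteq> B" for \<F>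
      using that B(2) by (intro sigma_sets.Basic miss_in_miss_sets compact_Union) auto
    moreover have "hit t (strip t \<inter> b) \<in> sigma_sets (closed_subsets t) (miss_sets t)"
      if "b \<in> B" for b
      using that B(2) by (intro hit_in_sigma_miss_sets[OF lc closed_strip]) auto
    ultimately show ?thesis
      unfolding S'_def by blast
  qed
  moreover have "\<exists>s'\<in>S'. F \<in> s' \<and> s' \<subseteq> s" if s: "s \<in> Fell_subbasis t" and F: "F \<in> s" for s F
  proof -
    consider (miss) K where "compact K" "s = miss t K"
      | (hit) U where "open U" "s = hit t (strip t \<inter> U)"
      using s unfolding Fell_subbasis_def miss_sets_def by blast
    then show ?thesis
    proof cases
      case miss
      from F have "F \<in> miss t K"
        unfolding miss(2) .
      with miss(1) obtain \<F> where "finite \<F>" "\<F> \<subseteq> B" "F \<in> miss t (\<Union>(closure ` \<F>))"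
        and "miss t (\<Union>(closure ` \<F>)) \<subseteq> s"
        using miss_refinement[of B, OF _ B_nhds] B(2) unfolding miss(2) by metis
      moreover from this(1,2) have "miss t (\<Union>(closure ` \<F>)) \<in> S'"
        unfolding S'_def by blast
      ultimately show ?thesis
        by blast
    next
      case hit
      then obtain x where x: "x \<in> F" "x \<in> strip t" "x \<in> U"
        using F unfolding hit(2) hit_def by blast
      then obtain b where b: "b \<in> B" "x \<in> b" "closure b \<subseteq> U"
        using B_nhds[OF hit(1)] by blast
      have "F \<in> hit t (strip t \<inter> b)"
        using F x b(2) unfolding hit(2) hit_def by blast
      moreover have "hit t (strip t \<inter> b) \<subseteq> s"
        using b(3) closure_subset unfolding hit(2) hit_def by blast
      moreover have "hit t (strip t \<inter> b) \<in> S'"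
        using b(1) unfolding S'_def by blast
      ultimately show ?thesis
        by blast
    qed
  qed
  ultimately show ?thesis
    using that by blast
qed

theorem sets_Cspace_eq_sigma_miss_sets:
  assumes lc: "locally_compact_space (euclidean :: 'l::{t2_space, second_countable_topology} topology)"
  shows "sets (Cspace t) = sigma_sets (closed_subsets t) (miss_sets t :: (real \<times> 'l) set set set)"
proof
  obtain S' :: "(real \<times> 'l) set set set"
    where S': "countable S'" "S' \<subseteq> sigma_sets (closed_subsets t) (miss_sets t)"
      "\<And>s F. s \<in> Fell_subbasis t \<Longrightarrow> F \<in> s \<Longrightarrow> \<exists>s'\<in>S'. F \<in> s' \<and> s' \<subseteq> s"
    using Fell_subbasis_countable_refinement[OF lc] by blast
  have "U \<in> sigma_sets (closed_subsets t) (miss_sets t)"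
    if "openin (Fell_topology t) U" for U :: "(real \<times> 'l) set set"
    using that unfolding Fell_topology_eq
    by (rule openin_topology_generated_by_in_sigma_sets[OF _ S'(1,2) miss_sets_subset_Pow S'(3)])
  then show "sets (Cspace t :: (real \<times> 'l) set measure) \<subseteq> sigma_sets (closed_subsets t) (miss_sets t)"
    unfolding sets_Cspace by (intro sigma_sets_mono) auto
  show "sigma_sets (closed_subsets t) (miss_sets t) \<subseteq> sets (Cspace t :: (real \<times> 'l) set measure)"
    unfolding sets_Cspace miss_sets_def
    by (intro sigma_sets_mono') (auto intro: openin_Fell_topology_miss)
qed

lemma measurable_CspaceI:
  fixes f :: "'a \<Rightarrow> (real \<times> 'l::{t2_space, second_countable_topology}) set"
  assumes lc: "locally_compact_space (euclidean :: 'l topology)"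
    and "f \<in> space M \<rightarrow> closed_subsets t"
    and "\<And>K. compact K \<Longrightarrow> K \<subseteq> strip t \<Longrightarrow> {x \<in> space M. f x \<inter> K = {}} \<in> sets M"
  shows "f \<in> measurable M (Cspace t)"
proof (rule measurable_sigma_sets[OF sets_Cspace_eq_sigma_miss_sets[OF lc] miss_sets_subset_Pow])
  show "f \<in> space M \<rightarrow> closed_subsets t"
    by fact
  fix y :: "(real \<times> 'l) set set" assume "y \<in> miss_sets t"
  then obtain K where "compact K" "K \<subseteq> strip t" "y = miss t K"
    unfolding miss_sets_def by blast
  moreover have "f -` miss t K \<inter> space M = {x \<in> space M. f x \<inter> K = {}}"
    using assms(2) unfolding miss_def by auto
  ultimately show "f -` y \<inter> space M \<in> sets M"
    using assms(3) by simp
qed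

lemma hit_in_sets_Cspace:
  assumes lc: "locally_compact_space (euclidean :: 'l::{t2_space, second_countable_topology} topology)"
    and "closed E"
  shows "hit t E \<in> sets (Cspace t :: (real \<times> 'l) set measure)"
  using hit_in_sigma_miss_sets[OF lc assms(2) open_UNIV, of t]
  by (simp add: sets_Cspace_eq_sigma_miss_sets[OF lc])

section \<open>Concatenation and restriction\<close>

definition time_shift :: "real \<Rightarrow> real \<times> 'l \<Rightarrow> real \<times> 'l" where
  "time_shift a p = (fst p + a, snd p)"

lemma continuous_on_time_shift: "continuous_on S (time_shift a :: real \<times> 'l::topological_space \<Rightarrow> _)"
  unfolding time_shift_def by (intro continuous_intros)

lemma compact_time_shift_image: "compact K \<Longrightarrow> compact (time_shift a ` K)"
  by (rule compact_continuous_image[OF continuous_on_time_shift])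

lemma closed_time_shift_vimage: "closed Z \<Longrightarrow> closed (time_shift a -` Z)"
  by (rule closed_vimage[OF _ continuous_on_time_shift])

lemma shift_back_eq_vimage: "shift_back A s = time_shift s -` A"
  unfolding shift_back_def time_shift_def by force

lemma oplus_eq_Un_vimage: "oplus s Z1 Z2 = Z1 \<union> time_shift (- s) -` Z2"
  unfolding oplus_def time_shift_def by force

lemma restr_eq_vimage: "restr s t Z = time_shift s -` (Z \<inter> ({s..t} \<times> UNIV))"
  unfolding restr_def shift_back_eq_vimage ..

lemma vimage_Int_disjoint_iff: "f -` A \<inter> K = {} \<longleftrightarrow> A \<inter> f ` K = {}"
  by blast

lemma oplus_in_closed_subsets:
  assumes "0 \<le> a" "0 \<le> b" "Z1 \<in> closed_subsets a" "Z2 \<in> closed_subsets b"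
  shows "oplus a Z1 Z2 \<in> closed_subsets (a + b)"
proof -
  have Z: "closed Z1" "Z1 \<subseteq> strip a" "closed Z2" "Z2 \<subseteq> strip b"
    using assms(3,4) unfolding mem_closed_subsets by auto
  have "Z1 \<subseteq> strip (a + b)"
    using Z(2) assms(2) by (auto simp: strip_def mem_Times_iff subset_eq)
  moreover have "time_shift (- a) -` Z2 \<subseteq> strip (a + b)"
    using Z(4) assms(1) by (auto simp: strip_def mem_Times_iff subset_eq time_shift_def)
  ultimately show ?thesis
    unfolding mem_closed_subsets oplus_eq_Un_vimage
    using Z(1,3) by (simp add: closed_Un closed_time_shift_vimage)
qed

lemma restr_in_closed_subsets:
  assumes "closed Z"
  shows "restr s t Z \<in> closed_subsets (t - s)"
proof -
  have "closed (Z \<inter> ({s..t} \<times> UNIV))"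
    using assms by (intro closed_Int closed_Times) auto
  moreover have "time_shift s -` (Z \<inter> ({s..t} \<times> UNIV)) \<subseteq> strip (t - s)"
    by (auto simp: strip_def mem_Times_iff subset_eq time_shift_def)
  ultimately show ?thesis
    unfolding mem_closed_subsets restr_eq_vimage using closed_time_shift_vimage by blast
qed

lemma measurable_oplus:
  assumes lc: "locally_compact_space (euclidean :: 'l::{t2_space, second_countable_topology} topology)"
    and "0 \<le> a" "0 \<le> b"
  shows "(\<lambda>(Z1, Z2). oplus a Z1 Z2)
    \<in> measurable (Cspace a \<Otimes>\<^sub>M Cspace b) (Cspace (a + b) :: (real \<times> 'l) set measure)"
proof (rule measurable_CspaceI[OF lc])
  show "(\<lambda>(Z1, Z2). oplus a Z1 Z2) \<in> space (Cspace a \<Otimes>\<^sub>M Cspace b) \<rightarrow> closed_subsets (a + b)"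
    using oplus_in_closed_subsets[OF assms(2,3)] by (auto simp: space_pair_measure space_Cspace)
  fix K :: "(real \<times> 'l) set" assume "compact K"
  have disjoint: "oplus a Z1 Z2 \<inter> K = {} \<longleftrightarrow> Z1 \<inter> K = {} \<and> Z2 \<inter> time_shift (- a) ` K = {}"
    for Z1 Z2
    unfolding oplus_eq_Un_vimage by blast
  have "{x \<in> space (Cspace a \<Otimes>\<^sub>M Cspace b). (\<lambda>(Z1, Z2). oplus a Z1 Z2) x \<inter> K = {}}
      = miss a K \<times> miss b (time_shift (- a) ` K)"
  proof (rule set_eqI)
    fix x :: "(real \<times> 'l) set \<times> (real \<times> 'l) set"
    show "x \<in> {x \<in> space (Cspace a \<Otimes>\<^sub>M Cspace b). (\<lambda>(Z1, Z2). oplus a Z1 Z2) x \<inter> K = {}}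
      \<longleftrightarrow> x \<in> miss a K \<times> miss b (time_shift (- a) ` K)"
      by (cases x) (simp add: space_pair_measure space_Cspace miss_def disjoint conj_ac)
  qed
  also have "\<dots> \<in> sets (Cspace a \<Otimes>\<^sub>M Cspace b)"
    using \<open>compact K\<close> by (intro pair_measureI miss_in_sets_Cspace compact_time_shift_image)
  finally show "{x \<in> space (Cspace a \<Otimes>\<^sub>M Cspace b). (\<lambda>(Z1, Z2). oplus a Z1 Z2) x \<inter> K = {}}
      \<in> sets (Cspace a \<Otimes>\<^sub>M Cspace b)" .
qed

lemma measurable_restr:
  assumes lc: "locally_compact_space (euclidean :: 'l::{t2_space, second_countable_topology} topology)"
  shows "restr s t \<in> measurable (Cspace u) (Cspace (t - s) :: (real \<times> 'l) set measure)"
proof (rule measurable_CspaceI[OF lc])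
  show "restr s t \<in> space (Cspace u) \<rightarrow> closed_subsets (t - s)"
    by (auto simp: space_Cspace mem_closed_subsets[of _ u] intro: restr_in_closed_subsets)
  fix K :: "(real \<times> 'l) set" assume "compact K"
  have disjoint: "restr s t Z \<inter> K = {} \<longleftrightarrow> Z \<inter> ({s..t} \<times> UNIV \<inter> time_shift s ` K) = {}" for Z
    unfolding restr_eq_vimage vimage_Int_disjoint_iff by (simp add: Int_assoc)
  have "{Z \<in> space (Cspace u). restr s t Z \<inter> K = {}} = miss u ({s..t} \<times> UNIV \<inter> time_shift s ` K)"
    unfolding space_Cspace miss_def by (simp only: disjoint)
  also have "\<dots> \<in> sets (Cspace u)"
    using \<open>compact K\<close>
    by (intro miss_in_sets_Cspace closed_Int_compact closed_Times compact_time_shift_image) auto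
  finally show "{Z \<in> space (Cspace u). restr s t Z \<inter> K = {}} \<in> sets (Cspace u)" .
qed

lemma restr_oplus_snd:
  fixes Z1 Z2 :: "(real \<times> 'l::topological_space) set"
  assumes "Z1 \<subseteq> strip a" "Z1 \<inter> ({a} \<times> UNIV) = {}"
  shows "restr a (a + e) (oplus a Z1 Z2) = restr 0 e Z2"
proof (rule set_eqI)
  fix p :: "real \<times> 'l"
  obtain r l where p: "p = (r, l)"
    by (cases p)
  have "(r + a, l) \<notin> Z1" if "0 \<le> r"
  proof
    assume "(r + a, l) \<in> Z1"
    moreover from this assms(1) have "(r + a, l) \<in> strip a"
      by blast
    with that have "r = 0"
      by simp
    ultimately show False
      using assms(2) by auto
  qed
  then show "p \<in> restr a (a + e) (oplus a Z1 Z2) \<longleftrightarrow> p \<in> restr 0 e Z2"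
    unfolding p by (auto simp: restr_eq_vimage oplus_eq_Un_vimage time_shift_def)
qed

lemma restr_oplus_fst:
  fixes Z1 Z2 :: "(real \<times> 'l::topological_space) set"
  assumes "Z1 \<subseteq> strip d" "Z2 \<subseteq> strip b" "Z2 \<inter> ({0} \<times> UNIV) = {}"
  shows "restr 0 d (oplus d Z1 Z2) = Z1"
proof (rule set_eqI)
  fix p :: "real \<times> 'l"
  obtain r l where p: "p = (r, l)"
    by (cases p)
  have "(r - d, l) \<notin> Z2" if "r \<le> d"
  proof
    assume "(r - d, l) \<in> Z2"
    moreover from this assms(2) have "(r - d, l) \<in> strip b"
      by blast
    with that have "r = d"
      by simp
    ultimately show False
      using assms(3) by auto
  qed
  moreover have "(r, l) \<in> Z1 \<Longrightarrow> 0 \<le> r \<and> r \<le> d"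
    using assms(1) by (metis mem_strip subsetD)
  ultimately show "p \<in> restr 0 d (oplus d Z1 Z2) \<longleftrightarrow> p \<in> Z1"
    unfolding p by (auto simp: restr_eq_vimage oplus_eq_Un_vimage time_shift_def)
qed

lemma restr_0_self:
  fixes W :: "(real \<times> 'l::topological_space) set"
  assumes "W \<subseteq> strip d"
  shows "restr 0 d W = W"
proof (rule set_eqI)
  fix p :: "real \<times> 'l"
  obtain r l where p: "p = (r, l)"
    by (cases p)
  have "(r, l) \<in> W \<Longrightarrow> 0 \<le> r \<and> r \<le> d"
    using assms by (metis mem_strip subsetD)
  then show "p \<in> restr 0 d W \<longleftrightarrow> p \<in> W"
    unfolding p by (auto simp: restr_eq_vimage time_shift_def)
qed

section \<open>Factorizing families\<close>

lemma mutually_ac_iff: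
  assumes "sets M = sets N"
  shows "mutually_ac M N \<longleftrightarrow> (\<forall>A\<in>sets M. emeasure M A = 0 \<longleftrightarrow> emeasure N A = 0)"
  using assms unfolding mutually_ac_def absolutely_continuous_def null_sets_def by auto

lemma (in sigma_finite_measure) AE_pair_measure_fst_snd:
  assumes "AE x in N. P x" "AE y in M. Q y"
  shows "AE z in N \<Otimes>\<^sub>M M. P (fst z) \<and> Q (snd z)"
proof -
  obtain N1 where N1: "N1 \<in> null_sets N" "{x \<in> space N. \<not> P x} \<subseteq> N1"
    using assms(1) by (auto simp: eventually_ae_filter)
  obtain N2 where N2: "N2 \<in> null_sets M" "{y \<in> space M. \<not> Q y} \<subseteq> N2"
    using assms(2) by (auto simp: eventually_ae_filter)
  show ?thesis
  proof (rule AE_I')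
    show "N1 \<times> space M \<union> space N \<times> N2 \<in> null_sets (N \<Otimes>\<^sub>M M)"
      using N1(1) N2(1) by auto
    show "{z \<in> space (N \<Otimes>\<^sub>M M). \<not> (P (fst z) \<and> Q (snd z))} \<subseteq> N1 \<times> space M \<union> space N \<times> N2"
      using N1(2) N2(2) by (auto simp: space_pair_measure)
  qed
qed

lemma factorizing_familyD:
  assumes "factorizing_family \<mu>" "0 < t"
  shows "prob_space (\<mu> t)" "sets (\<mu> t) = sets (Cspace t)" "space (\<mu> t) = closed_subsets t"
    and "0 < s \<Longrightarrow> mutually_ac (\<mu> (s + t))
      (distr (\<mu> s \<Otimes>\<^sub>M \<mu> t) (Cspace (s + t)) (\<lambda>(Z1, Z2). oplus s Z1 Z2))"
proof -
  show "prob_space (\<mu> t)" and sets: "sets (\<mu> t) = sets (Cspace t)"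
    using assms unfolding factorizing_family_def by auto
  from sets show "space (\<mu> t) = closed_subsets t"
    using sets_eq_imp_space_eq space_Cspace by metis
  show "0 < s \<Longrightarrow> mutually_ac (\<mu> (s + t))
      (distr (\<mu> s \<Otimes>\<^sub>M \<mu> t) (Cspace (s + t)) (\<lambda>(Z1, Z2). oplus s Z1 Z2))"
    using assms unfolding factorizing_family_def by auto
qed

lemma factorizing_family_AE_avoids:
  fixes \<mu> :: "real \<Rightarrow> (real \<times> 'l::{t2_space, second_countable_topology}) set measure"
  assumes lc: "locally_compact_space (euclidean :: 'l topology)"
    and ff: "factorizing_family \<mu>" and "0 < t" "r \<in> {0..t}"
  shows "AE Z in \<mu> t. Z \<inter> ({r} \<times> UNIV) = {}"
proof (rule AE_I')
  have "hit t ({r} \<times> UNIV) \<in> sets (\<mu> t)"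
    using factorizing_familyD(2)[OF ff \<open>0 < t\<close>] hit_in_sets_Cspace[OF lc, of "{r} \<times> UNIV" t]
    by (simp add: closed_Times)
  moreover have "emeasure (\<mu> t) (hit t ({r} \<times> UNIV)) = 0"
    using ff assms(3,4) factorizing_familyD(3)[OF ff \<open>0 < t\<close>]
    unfolding factorizing_family_def hit_def by auto
  ultimately show "hit t ({r} \<times> UNIV) \<in> null_sets (\<mu> t)"
    by blast
  show "{Z \<in> space (\<mu> t). \<not> Z \<inter> ({r} \<times> UNIV) = {}} \<subseteq> hit t ({r} \<times> UNIV)"
    using factorizing_familyD(3)[OF ff \<open>0 < t\<close>] unfolding hit_def by auto
qed

lemma factorizing_family_null_iff:
  fixes \<mu> :: "real \<Rightarrow> (real \<times> 'l::{t2_space, second_countable_topology}) set measure"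
  assumes lc: "locally_compact_space (euclidean :: 'l topology)"
    and ff: "factorizing_family \<mu>" and "0 < a" "0 < b"
    and S: "S \<in> sets (Cspace (a + b))"
    and X1: "X1 \<in> sets (Cspace a)" and X2: "X2 \<in> sets (Cspace b)"
    and oplus_mem: "\<And>Z1 Z2. Z1 \<in> closed_subsets a \<Longrightarrow> Z2 \<in> closed_subsets b \<Longrightarrow>
      Z1 \<inter> ({a} \<times> UNIV) = {} \<Longrightarrow> Z2 \<inter> ({0} \<times> UNIV) = {} \<Longrightarrow>
      oplus a Z1 Z2 \<in> S \<longleftrightarrow> Z1 \<in> X1 \<and> Z2 \<in> X2"
  shows "emeasure (\<mu> (a + b)) S = 0 \<longleftrightarrow> emeasure (\<mu> a) X1 * emeasure (\<mu> b) X2 = 0"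
proof -
  interpret b: prob_space "\<mu> b"
    using factorizing_familyD(1)[OF ff \<open>0 < b\<close>] .
  let ?P = "\<mu> a \<Otimes>\<^sub>M \<mu> b" and ?oplus = "\<lambda>(Z1, Z2). oplus a Z1 Z2"
  have sets_a: "sets (\<mu> a) = sets (Cspace a)" and space_a: "space (\<mu> a) = closed_subsets a"
    using factorizing_familyD(2,3)[OF ff \<open>0 < a\<close>] by simp_all
  have sets_b: "sets (\<mu> b) = sets (Cspace b)" and space_b: "space (\<mu> b) = closed_subsets b"
    using factorizing_familyD(2,3)[OF ff \<open>0 < b\<close>] by simp_all
  have sets_P: "sets ?P = sets (Cspace a \<Otimes>\<^sub>M Cspace b)"
    using sets_a sets_b by (rule sets_pair_measure_cong)
  have oplus_meas: "?oplus \<in> measurable ?P (Cspace (a + b))"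
    using measurable_oplus[OF lc, of a b] \<open>0 < a\<close> \<open>0 < b\<close>
    by (simp add: measurable_cong_sets[OF sets_P refl])
  have "emeasure (\<mu> (a + b)) S = 0 \<longleftrightarrow> emeasure (distr ?P (Cspace (a + b)) ?oplus) S = 0"
    using factorizing_familyD(2)[OF ff, of "a + b"] factorizing_familyD(4)[OF ff \<open>0 < b\<close> \<open>0 < a\<close>]
      \<open>0 < a\<close> \<open>0 < b\<close> S
    by (simp add: mutually_ac_iff)
  moreover have "emeasure (distr ?P (Cspace (a + b)) ?oplus) S = emeasure ?P (?oplus -` S \<inter> space ?P)"
    using oplus_meas S by (rule emeasure_distr)
  moreover have "emeasure ?P (?oplus -` S \<inter> space ?P) = emeasure ?P (X1 \<times> X2)"
  proof (rule emeasure_eq_AE)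
    have "X1 \<subseteq> closed_subsets a" "X2 \<subseteq> closed_subsets b"
      using sets.sets_into_space[OF X1] sets.sets_into_space[OF X2] by (simp_all add: space_Cspace)
    have "AE z in ?P. fst z \<inter> ({a} \<times> UNIV) = {} \<and> snd z \<inter> ({0} \<times> UNIV) = {}"
      using \<open>0 < a\<close> \<open>0 < b\<close>
      by (intro b.AE_pair_measure_fst_snd factorizing_family_AE_avoids[OF lc ff]) auto
    then show "AE z in ?P. z \<in> ?oplus -` S \<inter> space ?P \<longleftrightarrow> z \<in> X1 \<times> X2"
      using AE_space
    proof eventually_elim
      case (elim z)
      then show ?case
        using \<open>X1 \<subseteq> closed_subsets a\<close> \<open>X2 \<subseteq> closed_subsets b\<close>
        by (cases z) (auto simp: space_pair_measure space_a space_b oplus_mem)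
    qed
    show "?oplus -` S \<inter> space ?P \<in> sets ?P"
      using oplus_meas S by (rule measurable_sets)
    show "X1 \<times> X2 \<in> sets ?P"
      using X1 X2 sets_P by simp
  qed
  moreover have "emeasure ?P (X1 \<times> X2) = emeasure (\<mu> a) X1 * emeasure (\<mu> b) X2"
    using X1 X2 sets_a sets_b by (intro b.emeasure_pair_measure_Times) auto
  ultimately show ?thesis
    by simp
qed

lemma null_restr_drop_left:
  fixes \<mu> :: "real \<Rightarrow> (real \<times> 'l::{t2_space, second_countable_topology}) set measure"
  assumes lc: "locally_compact_space (euclidean :: 'l topology)"
    and ff: "factorizing_family \<mu>" and "0 \<le> a" "0 < b" "0 \<le> e"
    and A: "A \<in> sets (Cspace e)"
  shows "emeasure (\<mu> (a + b)) (restr a (a + e) -` A \<inter> closed_subsets (a + b)) = 0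
    \<longleftrightarrow> emeasure (\<mu> b) (restr 0 e -` A \<inter> closed_subsets b) = 0"
proof (cases "a = 0")
  case True
  then show ?thesis by simp
next
  case False
  with \<open>0 \<le> a\<close> have "0 < a" by simp
  have restr_sets: "restr c (c + e) -` A \<inter> closed_subsets u \<in> sets (Cspace u)" for c u
    using measurable_sets[OF measurable_restr[OF lc, of c "c + e" u]] A by (simp add: space_Cspace)
  have "emeasure (\<mu> (a + b)) (restr a (a + e) -` A \<inter> closed_subsets (a + b)) = 0
    \<longleftrightarrow> emeasure (\<mu> a) (closed_subsets a) * emeasure (\<mu> b) (restr 0 e -` A \<inter> closed_subsets b) = 0"
  proof (rule factorizing_family_null_iff[OF lc ff \<open>0 < a\<close> \<open>0 < b\<close>])
    show "restr a (a + e) -` A \<inter> closed_subsets (a + b) \<in> sets (Cspace (a + b))"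
      by (rule restr_sets)
    show "restr 0 e -` A \<inter> closed_subsets b \<in> sets (Cspace b)"
      using restr_sets[of 0 b] by simp
    show "closed_subsets a \<in> sets (Cspace a)"
      using sets.top[of "Cspace a"] by (simp add: space_Cspace)
    fix Z1 Z2 :: "(real \<times> 'l) set"
    assume Z: "Z1 \<in> closed_subsets a" "Z2 \<in> closed_subsets b" "Z1 \<inter> ({a} \<times> UNIV) = {}"
    have "oplus a Z1 Z2 \<in> closed_subsets (a + b)"
      using Z(1,2) \<open>0 < a\<close> \<open>0 < b\<close> by (intro oplus_in_closed_subsets) auto
    moreover have "restr a (a + e) (oplus a Z1 Z2) = restr 0 e Z2"
      using Z(1,3) unfolding mem_closed_subsets by (intro restr_oplus_snd) auto
    ultimately show "oplus a Z1 Z2 \<in> restr a (a + e) -` A \<inter> closed_subsets (a + b)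
      \<longleftrightarrow> Z1 \<in> closed_subsets a \<and> Z2 \<in> restr 0 e -` A \<inter> closed_subsets b"
      using Z(1,2) by simp
  qed
  moreover have "emeasure (\<mu> a) (closed_subsets a) = 1"
    using prob_space.emeasure_space_1[OF factorizing_familyD(1)[OF ff \<open>0 < a\<close>]]
      factorizing_familyD(3)[OF ff \<open>0 < a\<close>] by simp
  ultimately show ?thesis
    by simp
qed

lemma null_restr_drop_right:
  fixes \<mu> :: "real \<Rightarrow> (real \<times> 'l::{t2_space, second_countable_topology}) set measure"
  assumes lc: "locally_compact_space (euclidean :: 'l topology)"
    and ff: "factorizing_family \<mu>" and "0 < d" "0 \<le> b"
    and A: "A \<in> sets (Cspace d)"
  shows "emeasure (\<mu> (d + b)) (restr 0 d -` A \<inter> closed_subsets (d + b)) = 0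
    \<longleftrightarrow> emeasure (\<mu> d) A = 0"
proof (cases "b = 0")
  case True
  have "restr 0 d Z = Z" if "Z \<in> closed_subsets d" for Z :: "(real \<times> 'l) set"
    using that by (simp add: mem_closed_subsets restr_0_self)
  then have "restr 0 d -` A \<inter> closed_subsets d = A"
    using sets.sets_into_space[OF A] by (auto simp: space_Cspace)
  with True show ?thesis
    by simp
next
  case False
  with \<open>0 \<le> b\<close> have "0 < b" by simp
  have "emeasure (\<mu> (d + b)) (restr 0 d -` A \<inter> closed_subsets (d + b)) = 0
    \<longleftrightarrow> emeasure (\<mu> d) A * emeasure (\<mu> b) (closed_subsets b) = 0"
  proof (rule factorizing_family_null_iff[OF lc ff \<open>0 < d\<close> \<open>0 < b\<close> _ A])
    show "restr 0 d -` A \<inter> closed_subsets (d + b) \<in> sets (Cspace (d + b))"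
      using measurable_sets[OF measurable_restr[OF lc, of 0 d "d + b"]] A by (simp add: space_Cspace)
    show "closed_subsets b \<in> sets (Cspace b)"
      using sets.top[of "Cspace b"] by (simp add: space_Cspace)
    fix W1 W2 :: "(real \<times> 'l) set"
    assume W: "W1 \<in> closed_subsets d" "W2 \<in> closed_subsets b" "W2 \<inter> ({0} \<times> UNIV) = {}"
    have "oplus d W1 W2 \<in> closed_subsets (d + b)"
      using W(1,2) \<open>0 < d\<close> \<open>0 < b\<close> by (intro oplus_in_closed_subsets) auto
    moreover have "restr 0 d (oplus d W1 W2) = W1"
      using W unfolding mem_closed_subsets by (intro restr_oplus_fst) auto
    ultimately show "oplus d W1 W2 \<in> restr 0 d -` A \<inter> closed_subsets (d + b)
      \<longleftrightarrow> W1 \<in> A \<and> W2 \<in> closed_subsets b"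
      using W(2) by simp
  qed
  moreover have "emeasure (\<mu> b) (closed_subsets b) = 1"
    using prob_space.emeasure_space_1[OF factorizing_familyD(1)[OF ff \<open>0 < b\<close>]]
      factorizing_familyD(3)[OF ff \<open>0 < b\<close>] by simp
  ultimately show ?thesis
    by simp
qed

lemma null_restr_iff:
  fixes \<mu> :: "real \<Rightarrow> (real \<times> 'l::{t2_space, second_countable_topology}) set measure"
  assumes lc: "locally_compact_space (euclidean :: 'l topology)"
    and ff: "factorizing_family \<mu>" and "0 \<le> s" "s < t" "t \<le> u"
    and A: "A \<in> sets (Cspace (t - s))"
  shows "emeasure (\<mu> u) (restr s t -` A \<inter> closed_subsets u) = 0 \<longleftrightarrow> emeasure (\<mu> (t - s)) A = 0"
  using null_restr_drop_left[OF lc ff, of s "u - s" "t - s" A]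
    null_restr_drop_right[OF lc ff, of "t - s" "u - t" A] assms(3-6)
  by (simp add: algebra_simps)

theorem lemma2p6:
  fixes \<mu> :: "real \<Rightarrow> (real \<times> 'l::{t2_space, second_countable_topology}) set measure"
  assumes "locally_compact_space (euclidean :: 'l topology)"
    and "factorizing_family \<mu>"
    and "0 \<le> s" and "s < t" and "t \<le> 1"
  shows "mutually_ac (distr (\<mu> 1) (Cspace (t - s)) (restr s t)) (\<mu> (t - s))"
proof -
  have sets_1: "sets (\<mu> 1) = sets (Cspace 1)" and space_1: "space (\<mu> 1) = closed_subsets 1"
    using factorizing_familyD(2,3)[OF assms(2)] by simp_all
  have restr_meas: "restr s t \<in> measurable (\<mu> 1) (Cspace (t - s))"
    using measurable_restr[OF assms(1)] by (simp add: measurable_cong_sets[OF sets_1 refl])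
  have "sets (distr (\<mu> 1) (Cspace (t - s)) (restr s t)) = sets (\<mu> (t - s))"
    using factorizing_familyD(2)[OF assms(2), of "t - s"] assms(4) by simp
  moreover have "emeasure (distr (\<mu> 1) (Cspace (t - s)) (restr s t)) A = 0
    \<longleftrightarrow> emeasure (\<mu> (t - s)) A = 0" if "A \<in> sets (Cspace (t - s))" for A
    using emeasure_distr[OF restr_meas that] null_restr_iff[OF assms that] space_1 by simp
  ultimately show ?thesis
    by (simp add: mutually_ac_iff)
qed

end
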